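(* For $n\ge1$ let \[ \mathbf{M}_n=\begin{bmatrix} \frac{n}{2(2n+1)} & -\frac{3}{2n(2n+1)} & 0 & \frac{3}{2n^{5}}-\frac{9H_{n-1}^{(4)}}{2n}\\ 0 & \frac{n}{2(2n+1)} & -\frac{3}{2n(2n+1)} & \frac{3}{2n^{3}}\\ 0 & 0 & \frac{n}{2(2n+1)} & \frac{3}{2n}\\ 0 & 0 & 0 & 1 \end{bmatrix}. \] Then $\lim_{N\to\infty}\mathbf{M}_1\mathbf{M}_2\cdots\mathbf{M}_N$ exists and equals \[ \begin{bmatrix}0&0&0&\zeta(6)\\0&0&0&\zeta(4)\\0&0&0&\zeta(2)\\0&0&0&1\end{bmatrix}. \]
   Context: $\zeta$ denotes the Riemann zeta function. For integers $n\ge0$ and $p\ge1$, the hyper-harmonic number is $H_n^{(p)}=\sum_{k=1}^{n}k^{-p}$ (so $H_0^{(p)}=0$). *)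

theory Defs
  imports "HOL-Analysis.Analysis"
begin

definition zeta :: "real \<Rightarrow> real" where
  "zeta s = (\<Sum>n. 1 / (real (Suc n)) powr s)"

definition hharm :: "nat \<Rightarrow> nat \<Rightarrow> real" where
  "hharm p n = (\<Sum>k=1..n. 1 / (real k) ^ p)"

text \<open>Index of an element of type 4, positions 1,2,3,4 mapped to list positions 0..3
  (note: in type 4 the numeral 4 equals 0).\<close>
definition pos4 :: "4 \<Rightarrow> nat" where
  "pos4 i = (if i = 1 then 0 else if i = 2 then 1 else if i = 3 then 2 else 3)"

definition mat4 :: "real list list \<Rightarrow> real^4^4" where
  "mat4 xss = (\<chi> i j. xss ! pos4 i ! pos4 j)"

definition Mn :: "nat \<Rightarrow> real^4^4" where
  "Mn n = (let a = real n / (2 * (2 * real n + 1));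
               b = - 3 / (2 * real n * (2 * real n + 1)) in
    mat4 [[a, b, 0, 3 / (2 * real n ^ 5) - 9 * hharm 4 (n - 1) / (2 * real n)],
          [0, a, b, 3 / (2 * real n ^ 3)],
          [0, 0, a, 3 / (2 * real n)],
          [0, 0, 0, 1]])"

fun Mprod :: "nat \<Rightarrow> real^4^4" where
  "Mprod 0 = mat 1"
| "Mprod (Suc N) = Mprod N ** Mn (Suc N)"

end

theory Submission
  imports Defs "HOL-Real_Asymp.Real_Asymp"
begin

text \<open>
  The upper left 3\<times>3 block of \<open>M\<^sub>n\<close> is an upper triangular Toeplitz matrix, i.e.
  multiplication by an element of \<open>\<real>[X]/(X\<^sup>3)\<close>; reading the last column
  bottom-up as such an element as well, \<open>M\<^sub>1\<cdots>M\<^sub>N\<close> has blocks \<open>Q\<^sub>N = \<Prod>\<^sub>n\<^sub>\<le>\<^sub>N A\<^sub>n\<close> and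
  \<open>W\<^sub>N = \<Sum>\<^sub>n\<^sub>\<le>\<^sub>N Q\<^sub>n\<^sub>-\<^sub>1 v\<^sub>n\<close>. The constant term of \<open>A\<^sub>n\<close> is at most \<open>1/4\<close>, so \<open>Q\<^sub>N \<rightarrow> 0\<close>.
  The term \<open>Q\<^sub>n\<^sub>-\<^sub>1 v\<^sub>n\<close> turns out to be the \<open>n\<close>-th term of the accelerated series
  \<open>3 \<Sum>\<^sub>n 1/(C(2n,n) (n\<^sup>2 - X)) \<Prod>\<^sub>m\<^sub><\<^sub>n (m\<^sup>2 - 4X)/(m\<^sup>2 - X)\<close>, whose sum is
  \<open>\<Sum>\<^sub>k 1/(k\<^sup>2 - X) = \<zeta>(2) + \<zeta>(4) X + \<zeta>(6) X\<^sup>2\<close>. This acceleration identity is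
  proved by the WZ method: for
  \<open>F(n,k) = C(2n-2,n-1)\<^sup>-\<^sup>1 \<Prod>\<^sub>1\<^sub>\<le>\<^sub>j\<^sub><\<^sub>n (j\<^sup>2 - 4X) / \<Prod>\<^sub>0\<^sub>\<le>\<^sub>j\<^sub><\<^sub>n ((k+j)\<^sup>2 - X)\<close> and an explicit
  rational multiple \<open>G\<close> of \<open>F\<close> one has \<open>F(n,k) - F(n+1,k) = G(n,k+1) - G(n,k)\<close>;
  summing over \<open>k\<close> and \<open>n\<close>, the boundary terms vanish because \<open>F(n,k) = O(1/k\<^sup>2)\<close>
  uniformly up to a factor \<open>poly(n)/C(2n,n)\<close>.
\<close>

section \<open>The ring \<open>\<real>[X]/(X\<^sup>3)\<close>\<close>

datatype jet = Jet (jet0: real) (jet1: real) (jet2: real)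

instantiation jet :: comm_ring_1
begin
definition "zero_jet = Jet 0 0 0"
definition "one_jet = Jet 1 0 0"
definition "plus_jet f g = Jet (jet0 f + jet0 g) (jet1 f + jet1 g) (jet2 f + jet2 g)"
definition "minus_jet f g = Jet (jet0 f - jet0 g) (jet1 f - jet1 g) (jet2 f - jet2 g)"
definition "uminus_jet f = Jet (- jet0 f) (- jet1 f) (- jet2 f)"
definition "times_jet f g = Jet (jet0 f * jet0 g) (jet0 f * jet1 g + jet1 f * jet0 g)
   (jet0 f * jet2 g + jet1 f * jet1 g + jet2 f * jet0 g)"
instance
  by standard (auto simp: zero_jet_def one_jet_def plus_jet_def minus_jet_def uminus_jet_def
      times_jet_def algebra_simps jet.expand)
end

lemma jet_simps [simp]:
  "jet0 0 = 0" "jet1 0 = 0" "jet2 0 = 0" "jet0 1 = 1" "jet1 1 = 0" "jet2 1 = 0"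
  "jet0 (f + g) = jet0 f + jet0 g" "jet1 (f + g) = jet1 f + jet1 g" "jet2 (f + g) = jet2 f + jet2 g"
  "jet0 (f - g) = jet0 f - jet0 g" "jet1 (f - g) = jet1 f - jet1 g" "jet2 (f - g) = jet2 f - jet2 g"
  "jet0 (- f) = - jet0 f" "jet1 (- f) = - jet1 f" "jet2 (- f) = - jet2 f"
  "jet0 (f * g) = jet0 f * jet0 g" "jet1 (f * g) = jet0 f * jet1 g + jet1 f * jet0 g"
  "jet2 (f * g) = jet0 f * jet2 g + jet1 f * jet1 g + jet2 f * jet0 g"
  by (simp_all add: zero_jet_def one_jet_def plus_jet_def minus_jet_def uminus_jet_def
      times_jet_def)

lemma jet_eqI: "jet0 f = jet0 g \<Longrightarrow> jet1 f = jet1 g \<Longrightarrow> jet2 f = jet2 g \<Longrightarrow> f = g"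
  by (simp add: jet.expand)

lemma jet_sum [simp]:
  "jet0 (sum f S) = (\<Sum>x\<in>S. jet0 (f x))" "jet1 (sum f S) = (\<Sum>x\<in>S. jet1 (f x))"
  "jet2 (sum f S) = (\<Sum>x\<in>S. jet2 (f x))"
  by (induction S rule: infinite_finite_induct, auto)+

definition jet_const :: "real \<Rightarrow> jet" where "jet_const r = Jet r 0 0"
definition jet_X :: jet where "jet_X = Jet 0 1 0"

lemma jet_const_X_simps [simp]:
  "jet0 (jet_const r) = r" "jet1 (jet_const r) = 0" "jet2 (jet_const r) = 0"
  "jet0 jet_X = 0" "jet1 jet_X = 1" "jet2 jet_X = 0"
  by (simp_all add: jet_const_def jet_X_def)

lemma jet_X_power2 [simp]: "jet_X^2 = Jet 0 0 1"
  by (rule jet_eqI) (simp_all add: power2_eq_square)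

lemma jet_const_one: "jet_const 1 = 1"
  by (rule jet_eqI) auto

lemma jet_const_mult: "jet_const (a * b) = jet_const a * jet_const b"
  by (rule jet_eqI) auto

lemma jet_const_uminus: "jet_const (- a) = - jet_const a"
  by (rule jet_eqI) auto

lemma jet_const_prod: "jet_const (prod f S) = (\<Prod>x\<in>S. jet_const (f x))"
  by (induction S rule: infinite_finite_induct) (auto simp: jet_const_one jet_const_mult)

definition jet_nth :: "nat \<Rightarrow> jet \<Rightarrow> real" where
  "jet_nth i f = (if i = 0 then jet0 f else if i = 1 then jet1 f else jet2 f)"

lemma jet_nth_simps:
  "jet_nth i (f - g) = jet_nth i f - jet_nth i g"
  "jet_nth i (f + g) = jet_nth i f + jet_nth i g"
  "jet_nth i (sum h S) = (\<Sum>x\<in>S. jet_nth i (h x))"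
  "jet_nth i (jet_const r * f) = r * jet_nth i f"
  "jet_nth i 0 = 0"
  by (simp_all add: jet_nth_def)

definition jet_recip_sq :: "real \<Rightarrow> jet" where
  "jet_recip_sq d = Jet (1 / d^2) (1 / d^4) (1 / d^6)"

lemma jet_recip_sq_inverse: "d \<noteq> 0 \<Longrightarrow> jet_recip_sq d * (jet_const (d^2) - jet_X) = 1"
  by (rule jet_eqI) (simp_all add: jet_recip_sq_def field_simps)

section \<open>Block matrices over \<open>\<real>[X]/(X\<^sup>3)\<close>\<close>

definition jet_block :: "jet \<Rightarrow> jet \<Rightarrow> real^4^4" where
  "jet_block q w = mat4 [[jet0 q, jet1 q, jet2 q, jet2 w],
                         [0, jet0 q, jet1 q, jet1 w],
                         [0, 0, jet0 q, jet0 w],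
                         [0, 0, 0, 1]]"

lemma pos4_simps: "pos4 1 = 0" "pos4 2 = 1" "pos4 3 = 2" "pos4 4 = 3"
  by (simp_all add: pos4_def)

lemma jet_block_mult: "jet_block q w ** jet_block q' w' = jet_block (q * q') (w + q * w')"
  unfolding jet_block_def mat4_def matrix_matrix_mult_def
  by (simp add: vec_eq_iff sum_4 forall_4 pos4_simps)

lemma jet_block_one: "mat 1 = jet_block 1 0"
  unfolding jet_block_def mat4_def mat_def
  by (simp add: vec_eq_iff forall_4 pos4_simps)

lemma jet_block_tendsto:
  assumes "\<And>i. i < 3 \<Longrightarrow> (\<lambda>N. jet_nth i (q N)) \<longlonglongrightarrow> jet_nth i q'"
    and "\<And>i. i < 3 \<Longrightarrow> (\<lambda>N. jet_nth i (w N)) \<longlonglongrightarrow> jet_nth i w'"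
  shows "(\<lambda>N. jet_block (q N) (w N)) \<longlonglongrightarrow> jet_block q' w'"
  unfolding jet_block_def mat4_def
proof (intro tendsto_vec_lambda)
  fix i j :: 4
  have "(\<lambda>N. jet0 (q N)) \<longlonglongrightarrow> jet0 q'" "(\<lambda>N. jet1 (q N)) \<longlonglongrightarrow> jet1 q'"
    "(\<lambda>N. jet2 (q N)) \<longlonglongrightarrow> jet2 q'" "(\<lambda>N. jet0 (w N)) \<longlonglongrightarrow> jet0 w'"
    "(\<lambda>N. jet1 (w N)) \<longlonglongrightarrow> jet1 w'" "(\<lambda>N. jet2 (w N)) \<longlonglongrightarrow> jet2 w'"
    using assms[of 0] assms[of 1] assms[of 2] by (simp_all add: jet_nth_def)
  then show "(\<lambda>N. [[jet0 (q N), jet1 (q N), jet2 (q N), jet2 (w N)], [0, jet0 (q N), jet1 (q N), jet1 (w N)],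
            [0, 0, jet0 (q N), jet0 (w N)], [0, 0, 0, 1]] ! pos4 i ! pos4 j) \<longlonglongrightarrow>
        [[jet0 q', jet1 q', jet2 q', jet2 w'], [0, jet0 q', jet1 q', jet1 w'],
         [0, 0, jet0 q', jet0 w'], [0, 0, 0, 1]] ! pos4 i ! pos4 j"
    using exhaust_4[of i] exhaust_4[of j] by (auto simp: pos4_simps)
qed

definition Mn_diag :: "nat \<Rightarrow> real" where "Mn_diag n = real n / (2 * (2 * real n + 1))"

definition Mn_jet :: "nat \<Rightarrow> jet" where
  "Mn_jet n = Jet (Mn_diag n) (- 3 / (2 * real n * (2 * real n + 1))) 0"

definition Mn_col :: "nat \<Rightarrow> jet" where
  "Mn_col n = Jet (3 / (2 * real n)) (3 / (2 * real n ^ 3))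
     (3 / (2 * real n ^ 5) - 9 * hharm 4 (n - 1) / (2 * real n))"

definition Mprod_jet :: "nat \<Rightarrow> jet" where "Mprod_jet N = (\<Prod>m\<in>{1..N}. Mn_jet m)"

definition Mprod_col :: "nat \<Rightarrow> jet" where
  "Mprod_col N = (\<Sum>n\<in>{1..N}. Mprod_jet (n - 1) * Mn_col n)"

lemma Mn_eq_jet_block: "Mn n = jet_block (Mn_jet n) (Mn_col n)"
  unfolding Mn_def jet_block_def Mn_jet_def Mn_col_def Mn_diag_def Let_def by simp

lemma Mprod_eq_jet_block: "Mprod N = jet_block (Mprod_jet N) (Mprod_col N)"
proof (induction N)
  case 0
  then show ?case by (simp add: Mprod_jet_def Mprod_col_def jet_block_one)
next
  case (Suc N)
  then show ?case
    by (simp add: Mn_eq_jet_block jet_block_mult Mprod_jet_def Mprod_col_def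
        prod.cl_ivl_Suc sum.cl_ivl_Suc)
qed

section \<open>A WZ pair\<close>

definition central_binom :: "nat \<Rightarrow> real" where "central_binom m = real ((2 * m) choose m)"

lemma central_binom_pos: "central_binom m > 0"
  by (simp add: central_binom_def)

lemma central_binom_Suc:
  "central_binom (Suc m) * (real m + 1) = 2 * (2 * real m + 1) * central_binom m"
proof -
  have "((2 * Suc m) choose Suc m) * (m + 1) = 2 * (2 * m + 1) * ((2 * m) choose m)"
    by (smt (verit, best) Suc_eq_plus1 Suc_times_binomial_add Suc_times_binomial_eq
        add_Suc_right add_Suc_shift mult.commute mult.left_commute mult_2)
  then have "real ((2 * Suc m) choose Suc m) * (real m + 1)
      = 2 * (2 * real m + 1) * real ((2 * m) choose m)"
    by (metis (mono_tags) of_nat_1 of_nat_add of_nat_mult of_nat_numeral)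
  then show ?thesis unfolding central_binom_def .
qed

lemma central_binom_pred:
  "n \<ge> 1 \<Longrightarrow> central_binom n * real n = 2 * (2 * real n - 1) * central_binom (n - 1)"
  using central_binom_Suc[of "n - 1"] by (cases n) (auto simp: algebra_simps)

definition wz_norm :: "nat \<Rightarrow> real" where "wz_norm n = 1 / central_binom (n - 1)"

lemma wz_norm_pos: "wz_norm n > 0"
  by (simp add: wz_norm_def central_binom_pos)

lemma wz_norm_Suc: "n \<ge> 1 \<Longrightarrow> wz_norm (Suc n) = wz_norm n * real n / (2 * (2 * real n - 1))"
  using central_binom_pred[of n] central_binom_pos[of n] central_binom_pos[of "n - 1"]
  by (simp add: wz_norm_def field_simps)

definition wzA :: "nat \<Rightarrow> jet" where
  "wzA n = (\<Prod>j\<in>{1..<n}. jet_const (real j ^ 2) - jet_const 4 * jet_X)"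

definition wzB :: "nat \<Rightarrow> nat \<Rightarrow> jet" where
  "wzB n k = (\<Prod>j\<in>{0..<n}. jet_recip_sq (real (k + j)))"

definition wzF :: "nat \<Rightarrow> nat \<Rightarrow> jet" where "wzF n k = jet_const (wz_norm n) * wzA n * wzB n k"

definition wz_ratio :: "nat \<Rightarrow> nat \<Rightarrow> real" where
  "wz_ratio n k = - (2 * real k + 3 * real n - 2) / (2 * (2 * real n - 1))"

definition wzG :: "nat \<Rightarrow> nat \<Rightarrow> jet" where "wzG n k = jet_const (wz_ratio n k) * wzF n k"

lemma wzA_Suc: "n \<ge> 1 \<Longrightarrow> wzA (Suc n) = wzA n * (jet_const (real n ^ 2) - jet_const 4 * jet_X)"
  by (simp add: wzA_def prod.atLeastLessThan_Suc)

lemma wzB_Suc: "wzB (Suc n) k = wzB n k * jet_recip_sq (real (k + n))"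
  by (simp add: wzB_def prod.atLeastLessThan_Suc)

lemma wzB_shift: "wzB n k * jet_recip_sq (real (k + n)) = jet_recip_sq (real k) * wzB n (Suc k)"
proof -
  have "wzB n k * jet_recip_sq (real (k + n)) = (\<Prod>j<Suc n. jet_recip_sq (real (k + j)))"
    by (simp add: wzB_def atLeast0LessThan)
  also have "\<dots> = jet_recip_sq (real k) * wzB n (Suc k)"
    by (subst prod.lessThan_Suc_shift) (simp add: wzB_def atLeast0LessThan)
  finally show ?thesis .
qed

lemma wzB_Suc_right:
  assumes "k \<ge> 1"
  shows "wzB n (Suc k) = wzB n k * jet_recip_sq (real (k + n)) * (jet_const (real k ^ 2) - jet_X)"
proof -
  have "wzB n k * jet_recip_sq (real (k + n)) * (jet_const (real k ^ 2) - jet_X)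
      = wzB n (Suc k) * (jet_recip_sq (real k) * (jet_const (real k ^ 2) - jet_X))"
    by (simp only: wzB_shift mult_ac)
  moreover have "jet_recip_sq (real k) * (jet_const (real k ^ 2) - jet_X) = 1"
    using assms by (intro jet_recip_sq_inverse) auto
  ultimately show ?thesis by simp
qed

text \<open>The WZ equation with the common factor \<open>wzA n * wzB n k\<close> cancelled; \<open>x = n\<close>, \<open>y = k\<close>.\<close>
lemma wz_equation_reduced:
  fixes x y c :: real
  assumes "x \<ge> 1" "y \<ge> 1"
  defines "r \<equiv> \<lambda>k. - (2 * k + 3 * x - 2) / (2 * (2 * x - 1))"
  shows "jet_const c
      - jet_const (c * x / (2 * (2 * x - 1))) * (jet_const (x^2) - jet_const 4 * jet_X)
          * jet_recip_sq (y + x)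
      - jet_const (r (y + 1) * c) * jet_recip_sq (y + x) * (jet_const (y^2) - jet_X)
      + jet_const (r y * c) = 0"
    (is "?Z = 0")
proof -
  have nz: "y + x \<noteq> 0" "2 * x - 1 \<noteq> 0" "2 * (2 * x - 1) \<noteq> 0"
    using assms by auto
  let ?D = "jet_const ((y + x)^2) - jet_X"
  have inv: "jet_recip_sq (y + x) * ?D = 1"
    using nz by (simp add: jet_recip_sq_inverse)
  have cleared: "jet_const c * ?D
      - jet_const (c * x / (2 * (2 * x - 1))) * (jet_const (x^2) - jet_const 4 * jet_X)
      - jet_const (r (y + 1) * c) * (jet_const (y^2) - jet_X) + jet_const (r y * c) * ?D = 0"
    using nz by (intro jet_eqI) (simp_all add: r_def diff_divide_distrib[symmetric]
        add_divide_distrib[symmetric] divide_simps, simp_all add: algebra_simps power2_eq_square)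
  have "?Z * ?D = jet_const c * ?D
      - jet_const (c * x / (2 * (2 * x - 1))) * (jet_const (x^2) - jet_const 4 * jet_X)
          * (jet_recip_sq (y + x) * ?D)
      - jet_const (r (y + 1) * c) * (jet_recip_sq (y + x) * ?D) * (jet_const (y^2) - jet_X)
      + jet_const (r y * c) * ?D"
    by (simp add: algebra_simps)
  also have "\<dots> = 0"
    using cleared inv by simp
  finally have "?Z * (?D * jet_recip_sq (y + x)) = 0"
    by (metis mult.assoc mult_zero_left)
  then show ?thesis
    using inv by (simp add: mult.commute)
qed

lemma wz_equation:
  assumes "n \<ge> 1" "k \<ge> 1"
  shows "wzF n k - wzF (Suc n) k = wzG n (Suc k) - wzG n k"
proof -
  have "wzG n (Suc k) - wzG n k - (wzF n k - wzF (Suc n) k) = - (wzA n * wzB n k) *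
     (jet_const (wz_norm n)
      - jet_const (wz_norm n * real n / (2 * (2 * real n - 1)))
          * (jet_const (real n^2) - jet_const 4 * jet_X) * jet_recip_sq (real k + real n)
      - jet_const (wz_ratio n (Suc k) * wz_norm n) * jet_recip_sq (real k + real n)
          * (jet_const (real k^2) - jet_X)
      + jet_const (wz_ratio n k * wz_norm n))"
    unfolding wzG_def wzF_def using assms
    by (simp add: wzB_Suc_right wzA_Suc wzB_Suc wz_norm_Suc jet_const_mult algebra_simps)
  also have "\<dots> = 0"
    using wz_equation_reduced[of "real n" "real k" "wz_norm n"] assms
    by (simp add: wz_ratio_def add_ac)
  finally show ?thesis by simp
qed

definition wzF_partial :: "nat \<Rightarrow> nat \<Rightarrow> jet" where "wzF_partial n K = (\<Sum>t<K. wzF n (Suc t))"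

lemma wzF_partial_diff:
  "n \<ge> 1 \<Longrightarrow> wzF_partial n K - wzF_partial (Suc n) K = wzG n (Suc K) - wzG n 1"
proof -
  assume n: "n \<ge> 1"
  have "wzF_partial n K - wzF_partial (Suc n) K = (\<Sum>t<K. wzF n (Suc t) - wzF (Suc n) (Suc t))"
    by (simp add: wzF_partial_def sum_subtractf)
  also have "\<dots> = (\<Sum>t<K. wzG n (Suc (Suc t)) - wzG n (Suc t))"
    using n by (intro sum.cong) (auto simp: wz_equation)
  also have "\<dots> = wzG n (Suc K) - wzG n 1"
    by (subst sum_lessThan_telescope[where f="\<lambda>t. wzG n (Suc t)"]) simp
  finally show ?thesis .
qed

section \<open>The last column as an accelerated series\<close>

definition accel_prod :: "nat \<Rightarrow> jet" where
  "accel_prod n = (\<Prod>m\<in>{1..<n}. (jet_const (real m ^ 2) - jet_const 4 * jet_X) * jet_recip_sq (real m))"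

definition accel_term :: "nat \<Rightarrow> jet" where
  "accel_term n = jet_const (3 / central_binom n) * jet_recip_sq (real n) * accel_prod n"

lemma wzG_one: assumes n: "n \<ge> 1" shows "- wzG n 1 = accel_term n"
proof -
  have "wzB n 1 = (\<Prod>m\<in>{1..n}. jet_recip_sq (real m))"
    unfolding wzB_def
    by (rule prod.reindex_bij_witness[where i="\<lambda>m. m - 1" and j="\<lambda>j. j + 1"]) auto
  also have "\<dots> = jet_recip_sq (real n) * (\<Prod>m\<in>{1..<n}. jet_recip_sq (real m))"
    using n by (simp add: atLeastLessThanSuc_atLeastAtMost[symmetric] prod.atLeastLessThan_Suc
        mult.commute del: atLeastLessThanSuc_atLeastAtMost)
  finally have B1: "wzB n 1 = jet_recip_sq (real n) * (\<Prod>m\<in>{1..<n}. jet_recip_sq (real m))" .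
  have A: "accel_prod n = wzA n * (\<Prod>m\<in>{1..<n}. jet_recip_sq (real m))"
    unfolding accel_prod_def wzA_def by (simp add: prod.distrib)
  have c: "- (wz_ratio n 1 * wz_norm n) = 3 / central_binom n"
    using central_binom_pred[OF n] central_binom_pos[of n] central_binom_pos[of "n - 1"] n
    by (simp add: wz_ratio_def wz_norm_def field_simps)
  have "- wzG n 1 = jet_const (- (wz_ratio n 1 * wz_norm n)) * jet_recip_sq (real n) * accel_prod n"
    unfolding wzG_def wzF_def B1 A by (simp add: jet_const_mult jet_const_uminus algebra_simps)
  then show ?thesis unfolding accel_term_def c .
qed

definition Mn_diag_prod :: "nat \<Rightarrow> real" where "Mn_diag_prod n = (\<Prod>m\<in>{1..<n}. Mn_diag m)"

definition unipotent_prod :: "nat \<Rightarrow> jet" where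
  "unipotent_prod n = (\<Prod>m\<in>{1..<n}. 1 - jet_const (3 / real m ^ 2) * jet_X)"

lemma Mn_diag_prod_eq: "n \<ge> 1 \<Longrightarrow> Mn_diag_prod n = 2 / (real n * central_binom n)"
proof (induction n rule: dec_induct)
  case base
  then show ?case by (simp add: Mn_diag_prod_def central_binom_def)
next
  case (step n)
  have "Mn_diag_prod (Suc n) = Mn_diag_prod n * Mn_diag n"
    using step(1) by (simp add: Mn_diag_prod_def prod.atLeastLessThan_Suc)
  also have "\<dots> = 2 / (real n * central_binom n) * (real n / (2 * (2 * real n + 1)))"
    by (simp add: step.IH Mn_diag_def)
  also have "\<dots> = 2 / (real (Suc n) * central_binom (Suc n))"
    using central_binom_Suc[of n] central_binom_pos[of n] central_binom_pos[of "Suc n"] step(1)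
    by (simp add: divide_simps) (simp add: algebra_simps)
  finally show ?case .
qed

lemma Mn_jet_factor: "m \<ge> 1 \<Longrightarrow> Mn_jet m = jet_const (Mn_diag m) * (1 - jet_const (3 / real m ^ 2) * jet_X)"
  by (rule jet_eqI) (simp_all add: Mn_jet_def Mn_diag_def field_simps power2_eq_square)

lemma Mprod_jet_factor: "n \<ge> 1 \<Longrightarrow> Mprod_jet (n - 1) = jet_const (Mn_diag_prod n) * unipotent_prod n"
proof -
  assume n: "n \<ge> 1"
  then have "{1..n - 1} = {1..<n}" by auto
  then have "Mprod_jet (n - 1) = (\<Prod>m\<in>{1..<n}. jet_const (Mn_diag m) * (1 - jet_const (3 / real m ^ 2) * jet_X))"
    unfolding Mprod_jet_def by (intro prod.cong) (auto simp: Mn_jet_factor)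
  then show ?thesis by (simp add: prod.distrib Mn_diag_prod_def unipotent_prod_def jet_const_prod)
qed

lemma accel_prod_eq:
  "n \<ge> 1 \<Longrightarrow> accel_prod n = unipotent_prod n * (1 - jet_const (3 * hharm 4 (n - 1)) * jet_X^2)"
proof (induction n rule: dec_induct)
  case base
  then show ?case
    by (simp add: accel_prod_def unipotent_prod_def hharm_def jet_const_def
        zero_jet_def[symmetric] one_jet_def[symmetric])
next
  case (step n)
  have factor: "(1 - jet_const (3 * hharm 4 (n - 1)) * jet_X^2)
          * ((jet_const (real n ^ 2) - jet_const 4 * jet_X) * jet_recip_sq (real n))
      = (1 - jet_const (3 / real n ^ 2) * jet_X) * (1 - jet_const (3 * hharm 4 n) * jet_X^2)"
  proof -
    have h: "hharm 4 n = hharm 4 (n - 1) + 1 / real n ^ 4"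
      using step(1) by (cases n) (simp_all add: hharm_def)
    have "real n \<noteq> 0"
      using step(1) by simp
    then show ?thesis
      by (intro jet_eqI) (simp_all add: jet_recip_sq_def h field_simps)
  qed
  have "accel_prod (Suc n)
      = accel_prod n * ((jet_const (real n ^ 2) - jet_const 4 * jet_X) * jet_recip_sq (real n))"
    using step(1) by (simp add: accel_prod_def prod.atLeastLessThan_Suc)
  also have "\<dots> = unipotent_prod n * ((1 - jet_const (3 / real n ^ 2) * jet_X)
      * (1 - jet_const (3 * hharm 4 n) * jet_X^2))"
    by (simp only: step.IH mult.assoc factor)
  also have "\<dots> = unipotent_prod (Suc n) * (1 - jet_const (3 * hharm 4 (Suc n - 1)) * jet_X^2)"
    using step(1) by (simp add: unipotent_prod_def prod.atLeastLessThan_Suc mult_ac)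
  finally show ?case .
qed

lemma Mn_col_factor:
  "n \<ge> 1 \<Longrightarrow> Mn_col n = jet_const (3 / (2 * real n))
     * (jet_const (real n ^ 2) * jet_recip_sq (real n) - jet_const (3 * hharm 4 (n - 1)) * jet_X^2)"
  by (rule jet_eqI) (simp_all add: Mn_col_def jet_recip_sq_def power2_eq_square field_simps
      eval_nat_numeral)

lemma Mprod_col_term: assumes n: "n \<ge> 1" shows "Mprod_jet (n - 1) * Mn_col n = accel_term n"
proof -
  have "jet_const (Mn_diag_prod n) * jet_const (3 / (2 * real n))
      * (jet_const (real n ^ 2) * jet_recip_sq (real n) - jet_const (3 * hharm 4 (n - 1)) * jet_X^2)
     = jet_const (3 / central_binom n) * jet_recip_sq (real n)
      * (1 - jet_const (3 * hharm 4 (n - 1)) * jet_X^2)"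
    using n central_binom_pos[of n]
    by (intro jet_eqI) (simp_all add: Mn_diag_prod_eq jet_recip_sq_def power2_eq_square
        field_simps eval_nat_numeral)
  then show ?thesis
    unfolding Mprod_jet_factor[OF n] Mn_col_factor[OF n] accel_term_def accel_prod_eq[OF n]
    by (simp add: mult_ac)
qed

lemma Mprod_col_eq_accel: "Mprod_col N = (\<Sum>j<N. accel_term (Suc j))"
proof -
  have "Mprod_col N = (\<Sum>n\<in>{1..N}. accel_term n)"
    unfolding Mprod_col_def by (intro sum.cong refl) (simp add: Mprod_col_term del: One_nat_def)
  also have "\<dots> = (\<Sum>j<N. accel_term (Suc j))"
    by (rule sum.reindex_bij_witness[where i=Suc and j="\<lambda>n. n - 1"]) auto
  finally show ?thesis .
qed

lemma wzF_partial_telescope: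
  "wzF_partial 1 K - wzF_partial (Suc N) K = (\<Sum>j<N. wzG (Suc j) (Suc K)) + Mprod_col N"
proof -
  have "wzF_partial 1 K - wzF_partial (Suc N) K
      = (\<Sum>j<N. wzF_partial (Suc j) K - wzF_partial (Suc (Suc j)) K)"
    by (subst sum_lessThan_telescope'[where f="\<lambda>j. wzF_partial (Suc j) K"]) simp
  also have "\<dots> = (\<Sum>j<N. wzG (Suc j) (Suc K) + accel_term (Suc j))"
    by (intro sum.cong refl) (simp add: wzF_partial_diff wzG_one[symmetric])
  also have "\<dots> = (\<Sum>j<N. wzG (Suc j) (Suc K)) + Mprod_col N"
    by (simp add: sum.distrib Mprod_col_eq_accel)
  finally show ?thesis .
qed

section \<open>Coefficientwise bounds\<close>

definition jet_dominated :: "jet \<Rightarrow> jet \<Rightarrow> bool" where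
  "jet_dominated f g \<longleftrightarrow> \<bar>jet0 f\<bar> \<le> jet0 g \<and> \<bar>jet1 f\<bar> \<le> jet1 g \<and> \<bar>jet2 f\<bar> \<le> jet2 g"

lemma jet_dominated_mult:
  assumes "jet_dominated f g" "jet_dominated f' g'"
  shows "jet_dominated (f * f') (g * g')"
proof -
  have "\<bar>jet0 f\<bar> \<le> jet0 g" "\<bar>jet1 f\<bar> \<le> jet1 g" "\<bar>jet2 f\<bar> \<le> jet2 g"
    "\<bar>jet0 f'\<bar> \<le> jet0 g'" "\<bar>jet1 f'\<bar> \<le> jet1 g'" "\<bar>jet2 f'\<bar> \<le> jet2 g'"
    using assms by (auto simp: jet_dominated_def)
  then have "\<bar>jet0 f * jet0 f'\<bar> \<le> jet0 g * jet0 g'" "\<bar>jet0 f * jet1 f'\<bar> \<le> jet0 g * jet1 g'"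
     "\<bar>jet1 f * jet0 f'\<bar> \<le> jet1 g * jet0 g'" "\<bar>jet0 f * jet2 f'\<bar> \<le> jet0 g * jet2 g'"
     "\<bar>jet1 f * jet1 f'\<bar> \<le> jet1 g * jet1 g'" "\<bar>jet2 f * jet0 f'\<bar> \<le> jet2 g * jet0 g'"
    by (simp_all add: abs_mult mult_mono')
  then show ?thesis
    unfolding jet_dominated_def by (auto intro: order_trans[OF abs_triangle_ineq] add_mono)
qed

lemma jet_dominated_prod:
  "(\<And>x. x \<in> S \<Longrightarrow> jet_dominated (f x) (g x)) \<Longrightarrow> jet_dominated (prod f S) (prod g S)"
proof (induction S rule: infinite_finite_induct)
  case (insert x F)
  then show ?case by (simp add: jet_dominated_mult)
qed (simp_all add: jet_dominated_def)

definition jet_geom :: jet where "jet_geom = Jet 1 1 1"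

lemma jet_geom_power: "jet_geom ^ m = Jet 1 (real m) (real m * (real m + 1) / 2)"
proof (induction m)
  case 0
  then show ?case by (simp add: one_jet_def)
next
  case (Suc m)
  show ?case unfolding power_Suc Suc by (rule jet_eqI) (simp_all add: jet_geom_def field_simps)
qed

lemma jet_dominated_geom_bound:
  assumes "jet_dominated f (jet_const s * jet_geom ^ m)" "i < 3"
  shows "\<bar>jet_nth i f\<bar> \<le> s * (real m + 1)^2"
proof -
  have bounds: "\<bar>jet0 f\<bar> \<le> s" "\<bar>jet1 f\<bar> \<le> s * real m" "\<bar>jet2 f\<bar> \<le> s * (real m * (real m + 1) / 2)"
    using assms(1) by (auto simp: jet_dominated_def jet_geom_power)
  then have s: "s \<ge> 0" by linarith
  have scale: "s * a \<le> s * (real m + 1)^2" if "a \<le> (real m + 1)^2" for a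
    using that s by (rule mult_left_mono)
  have "s \<le> s * (real m + 1)^2" "s * real m \<le> s * (real m + 1)^2"
    "s * (real m * (real m + 1) / 2) \<le> s * (real m + 1)^2"
    using scale[of 1] scale[of "real m"] scale[of "real m * (real m + 1) / 2"]
    by (simp_all add: power2_eq_square field_simps)
  moreover have "i = 0 \<or> i = 1 \<or> i = 2" using assms(2) by auto
  ultimately show ?thesis
    using bounds by (auto simp: jet_nth_def simp del: times_divide_eq_right)
qed

lemma jet_dominated_wzA: "jet_dominated (wzA n) (jet_const (\<Prod>j\<in>{1..<n}. real j ^ 2) * jet_geom ^ (4 * (n - 1)))"
proof -
  have "jet_dominated (wzA n) (\<Prod>j\<in>{1..<n}. jet_const (real j ^ 2) * jet_geom ^ 4)"
    unfolding wzA_def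
    by (rule jet_dominated_prod) (simp add: jet_dominated_def jet_geom_power)
  also have "(\<Prod>j\<in>{1..<n}. jet_const (real j ^ 2) * jet_geom ^ 4)
      = jet_const (\<Prod>j\<in>{1..<n}. real j ^ 2) * jet_geom ^ (4 * (n - 1))"
    by (simp add: prod.distrib jet_const_prod power_mult[symmetric] mult.commute)
  finally show ?thesis .
qed

lemma jet_dominated_recip_sq: "d \<ge> 1 \<Longrightarrow> jet_dominated (jet_recip_sq d) (jet_const (1 / d^2) * jet_geom)"
proof -
  assume d: "d \<ge> 1"
  have "1 / d^4 \<le> 1 / d^2" "1 / d^6 \<le> 1 / d^2"
    using d by (auto intro!: divide_left_mono power_increasing)
  then show ?thesis by (simp add: jet_dominated_def jet_recip_sq_def jet_geom_def)
qed

lemma jet_dominated_wzB: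
  "k \<ge> 1 \<Longrightarrow> jet_dominated (wzB n k) (jet_const (\<Prod>j\<in>{0..<n}. 1 / real (k + j) ^ 2) * jet_geom ^ n)"
proof -
  assume k: "k \<ge> 1"
  have "jet_dominated (wzB n k) (\<Prod>j\<in>{0..<n}. jet_const (1 / real (k + j) ^ 2) * jet_geom)"
    unfolding wzB_def using k by (intro jet_dominated_prod jet_dominated_recip_sq) auto
  also have "(\<Prod>j\<in>{0..<n}. jet_const (1 / real (k + j) ^ 2) * jet_geom)
      = jet_const (\<Prod>j\<in>{0..<n}. 1 / real (k + j) ^ 2) * jet_geom ^ n"
    by (simp add: prod.distrib jet_const_prod)
  finally show ?thesis .
qed

lemma wz_prod_ratio_le:
  assumes "n \<ge> 1" "k \<ge> 1"
  shows "(\<Prod>j\<in>{1..<n}. real j ^ 2) * (\<Prod>j\<in>{0..<n}. 1 / real (k + j) ^ 2) \<le> 1 / real k ^ 2"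
proof -
  have "(\<Prod>j\<in>{0..<n}. 1 / real (k + j) ^ 2) = 1 / real k ^ 2 * (\<Prod>j\<in>{1..<n}. 1 / real (k + j) ^ 2)"
    using assms by (subst prod.atLeast_Suc_lessThan) auto
  then have "(\<Prod>j\<in>{1..<n}. real j ^ 2) * (\<Prod>j\<in>{0..<n}. 1 / real (k + j) ^ 2)
      = 1 / real k ^ 2 * (\<Prod>j\<in>{1..<n}. (real j / real (k + j)) ^ 2)"
    by (simp add: prod.distrib[symmetric] power_divide)
  also have "\<dots> \<le> 1 / real k ^ 2 * 1"
    using assms by (intro mult_left_mono prod_le_1) (auto simp: power_le_one_iff divide_le_eq_1)
  finally show ?thesis by simp
qed

definition wzF_bound :: "nat \<Rightarrow> real" where "wzF_bound n = wz_norm n * (5 * real n + 1)^2"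

lemma wzF_bound_le:
  assumes "n \<ge> 1" "k \<ge> 1" "i < 3"
  shows "\<bar>jet_nth i (wzF n k)\<bar> \<le> wzF_bound n / real k ^ 2"
proof -
  let ?J = "\<Prod>j\<in>{1..<n}. real j ^ 2" and ?K = "\<Prod>j\<in>{0..<n}. 1 / real (k + j) ^ 2"
  have "jet_dominated (wzF n k)
      (jet_const (wz_norm n) * (jet_const ?J * jet_geom ^ (4 * (n - 1))) * (jet_const ?K * jet_geom ^ n))"
    unfolding wzF_def using assms wz_norm_pos[of n]
    by (intro jet_dominated_mult jet_dominated_wzA jet_dominated_wzB) (auto simp: jet_dominated_def)
  also have "jet_const (wz_norm n) * (jet_const ?J * jet_geom ^ (4 * (n - 1))) * (jet_const ?K * jet_geom ^ n)
      = jet_const (wz_norm n * ?J * ?K) * jet_geom ^ (4 * (n - 1) + n)"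
    by (simp add: jet_const_mult power_add mult_ac)
  finally have "\<bar>jet_nth i (wzF n k)\<bar> \<le> wz_norm n * ?J * ?K * (real (4 * (n - 1) + n) + 1)^2"
    using assms(3) by (rule jet_dominated_geom_bound)
  also have "\<dots> \<le> wz_norm n * (1 / real k ^ 2) * (5 * real n + 1)^2"
  proof (rule mult_mono)
    show "wz_norm n * ?J * ?K \<le> wz_norm n * (1 / real k ^ 2)"
      using mult_left_mono[OF wz_prod_ratio_le[OF assms(1,2)] less_imp_le[OF wz_norm_pos[of n]]]
      by (simp only: mult.assoc)
    show "(real (4 * (n - 1) + n) + 1)^2 \<le> (5 * real n + 1)^2"
      using assms(1) by (intro power_mono) (auto simp: of_nat_diff)
  qed (auto simp: less_imp_le[OF wz_norm_pos])
  finally show ?thesis by (simp add: wzF_bound_def field_simps)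
qed

lemma Mn_diag_le: "0 \<le> Mn_diag m" "Mn_diag m \<le> 1/4"
  by (auto simp: Mn_diag_def field_simps)

lemma jet_dominated_Mn_jet: "m \<ge> 1 \<Longrightarrow> jet_dominated (Mn_jet m) (jet_const (Mn_diag m) * jet_geom ^ 3)"
proof -
  assume m: "m \<ge> 1"
  then have "1 * 1 \<le> real m * real m" by (intro mult_mono) auto
  then have "1 / real m \<le> real m" using m by (simp add: divide_simps)
  then have "3 / (2 * (2 * real m + 1)) * (1 / real m) \<le> 3 / (2 * (2 * real m + 1)) * real m"
    by (intro mult_left_mono) auto
  then have "3 / (2 * real m * (2 * real m + 1)) \<le> 3 * real m / (2 * (2 * real m + 1))"
    by (simp add: algebra_simps)
  then show ?thesis
    using Mn_diag_le(1)[of m] by (simp add: jet_dominated_def Mn_jet_def Mn_diag_def jet_geom_power)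
qed

lemma Mprod_jet_bound: "i < 3 \<Longrightarrow> \<bar>jet_nth i (Mprod_jet N)\<bar> \<le> (1/4)^N * (3 * real N + 1)^2"
proof -
  assume i: "i < 3"
  have "jet_dominated (Mprod_jet N) (\<Prod>m\<in>{1..N}. jet_const (Mn_diag m) * jet_geom ^ 3)"
    unfolding Mprod_jet_def by (intro jet_dominated_prod jet_dominated_Mn_jet) auto
  also have "(\<Prod>m\<in>{1..N}. jet_const (Mn_diag m) * jet_geom ^ 3)
      = jet_const (\<Prod>m\<in>{1..N}. Mn_diag m) * jet_geom ^ (3 * N)"
    by (simp add: prod.distrib jet_const_prod power_mult[symmetric] mult.commute)
  finally have "\<bar>jet_nth i (Mprod_jet N)\<bar> \<le> (\<Prod>m\<in>{1..N}. Mn_diag m) * (real (3 * N) + 1)^2"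
    using i by (rule jet_dominated_geom_bound)
  also have "\<dots> \<le> (1/4)^N * (3 * real N + 1)^2"
  proof (rule mult_mono)
    show "(\<Prod>m\<in>{1..N}. Mn_diag m) \<le> (1/4)^N"
      using prod_mono[of "{1..N}" Mn_diag "\<lambda>_. 1/4"] Mn_diag_le by simp
  qed simp_all
  finally show ?thesis .
qed

lemma Mprod_jet_tendsto: "i < 3 \<Longrightarrow> (\<lambda>N. jet_nth i (Mprod_jet N)) \<longlonglongrightarrow> 0"
proof (rule Lim_null_comparison)
  show "(\<lambda>N. (1/4)^N * (3 * real N + 1)^2) \<longlonglongrightarrow> 0"
    by real_asymp
  show "i < 3 \<Longrightarrow> \<forall>\<^sub>F N in sequentially. norm (jet_nth i (Mprod_jet N)) \<le> (1/4)^N * (3 * real N + 1)^2"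
    using Mprod_jet_bound by (intro always_eventually allI) simp
qed

lemma summable_inverse_Suc_power: "p \<ge> 2 \<Longrightarrow> summable (\<lambda>t. 1 / real (Suc t) ^ p)"
  using inverse_power_summable[of p] summable_Suc_iff[of "\<lambda>t. inverse (real t ^ p)"]
  by (simp add: inverse_eq_divide)

lemma zeta_of_nat: "zeta (real p) = (\<Sum>t. 1 / real (Suc t) ^ p)"
  by (simp add: zeta_def powr_realpow)

definition zeta_jet :: jet where "zeta_jet = Jet (zeta 2) (zeta 4) (zeta 6)"

lemma jet_nth_wzF_one: "i < 3 \<Longrightarrow> jet_nth i (wzF 1 (Suc t)) = 1 / real (Suc t) ^ (2 * i + 2)"
proof -
  assume "i < 3"
  then have "i = 0 \<or> i = 1 \<or> i = 2" by auto
  moreover have "wzF 1 (Suc t) = jet_recip_sq (real (Suc t))"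
    by (simp add: wzF_def wz_norm_def central_binom_def wzA_def wzB_def jet_const_one)
  ultimately show ?thesis by (auto simp: jet_nth_def jet_recip_sq_def eval_nat_numeral)
qed

lemma wzF_partial_one_tendsto: "i < 3 \<Longrightarrow> (\<lambda>K. jet_nth i (wzF_partial 1 K)) \<longlonglongrightarrow> jet_nth i zeta_jet"
proof -
  assume i: "i < 3"
  have "i = 0 \<or> i = 1 \<or> i = 2"
    using i by auto
  then have "jet_nth i zeta_jet = zeta (real (2 * i + 2))"
    by (auto simp: jet_nth_def zeta_jet_def)
  moreover have "(\<lambda>K. \<Sum>t<K. 1 / real (Suc t) ^ (2 * i + 2)) \<longlonglongrightarrow> zeta (real (2 * i + 2))"
    unfolding zeta_of_nat by (intro summable_LIMSEQ summable_inverse_Suc_power) simp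
  moreover have "jet_nth i (wzF_partial 1 K) = (\<Sum>t<K. 1 / real (Suc t) ^ (2 * i + 2))" for K
    unfolding wzF_partial_def jet_nth_simps using jet_nth_wzF_one[OF i] by simp
  ultimately show ?thesis by simp
qed

lemma wzF_series:
  assumes "n \<ge> 1" "i < 3"
  shows "summable (\<lambda>t. jet_nth i (wzF n (Suc t)))"
    and "\<bar>\<Sum>t. jet_nth i (wzF n (Suc t))\<bar> \<le> wzF_bound n * (\<Sum>t. 1 / real (Suc t) ^ 2)"
proof -
  have major: "summable (\<lambda>t. wzF_bound n * (1 / real (Suc t) ^ 2))"
    by (intro summable_mult summable_inverse_Suc_power) simp
  have le: "norm (jet_nth i (wzF n (Suc t))) \<le> wzF_bound n * (1 / real (Suc t) ^ 2)" for t
    using wzF_bound_le[of n "Suc t" i] assms by simp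
  show "summable (\<lambda>t. jet_nth i (wzF n (Suc t)))"
    by (rule summable_comparison_test'[OF major le])
  have "\<bar>\<Sum>t. jet_nth i (wzF n (Suc t))\<bar> \<le> (\<Sum>t. wzF_bound n * (1 / real (Suc t) ^ 2))"
    using norm_suminf_le[OF le major] by simp
  also have "\<dots> = wzF_bound n * (\<Sum>t. 1 / real (Suc t) ^ 2)"
    by (intro suminf_mult summable_inverse_Suc_power) simp
  finally show "\<bar>\<Sum>t. jet_nth i (wzF n (Suc t))\<bar> \<le> wzF_bound n * (\<Sum>t. 1 / real (Suc t) ^ 2)" .
qed

lemma abs_wz_ratio_le: "n \<ge> 1 \<Longrightarrow> \<bar>wz_ratio n (Suc K)\<bar> \<le> 2 * real K + 2 + 3 * real n"
proof -
  assume n: "n \<ge> 1"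
  have "\<bar>wz_ratio n (Suc K)\<bar> = (2 * real K + 3 * real n) / (2 * (2 * real n - 1))"
    using n by (simp add: wz_ratio_def abs_div_pos)
  also have "\<dots> \<le> (2 * real K + 3 * real n) / 1"
    using n by (intro divide_left_mono) auto
  finally show ?thesis by simp
qed

lemma wzG_tendsto_zero:
  assumes n: "n \<ge> 1" and i: "i < 3"
  shows "(\<lambda>K. jet_nth i (wzG n (Suc K))) \<longlonglongrightarrow> 0"
proof (rule Lim_null_comparison)
  show "(\<lambda>K. wzF_bound n * ((2 * real K + 2 + 3 * real n) / (real K + 1) ^ 2)) \<longlonglongrightarrow> 0"
    by (intro tendsto_mult_right_zero) real_asymp
  have "\<bar>jet_nth i (wzG n (Suc K))\<bar>
      \<le> (2 * real K + 2 + 3 * real n) * (wzF_bound n / real (Suc K) ^ 2)" for K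
    unfolding wzG_def jet_nth_simps abs_mult
    by (rule mult_mono[OF abs_wz_ratio_le[OF n] wzF_bound_le[OF n _ i]]) auto
  then show "\<forall>\<^sub>F K in sequentially. norm (jet_nth i (wzG n (Suc K)))
      \<le> wzF_bound n * ((2 * real K + 2 + 3 * real n) / (real K + 1) ^ 2)"
    by (intro always_eventually allI) (simp add: field_simps)
qed

text \<open>Letting \<open>K \<rightarrow> \<infinity>\<close> in the telescoped WZ identity.\<close>
lemma Mprod_col_eq:
  assumes i: "i < 3"
  shows "jet_nth i (Mprod_col N) = jet_nth i zeta_jet - (\<Sum>t. jet_nth i (wzF (Suc N) (Suc t)))"
proof -
  have "(\<lambda>K. jet_nth i (wzF_partial 1 K) - jet_nth i (wzF_partial (Suc N) K)
        - (\<Sum>j<N. jet_nth i (wzG (Suc j) (Suc K))))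
     \<longlonglongrightarrow> jet_nth i zeta_jet - (\<Sum>t. jet_nth i (wzF (Suc N) (Suc t))) - (\<Sum>j<N. 0)"
  proof (intro tendsto_diff tendsto_sum)
    show "(\<lambda>K. jet_nth i (wzF_partial 1 K)) \<longlonglongrightarrow> jet_nth i zeta_jet"
      by (rule wzF_partial_one_tendsto[OF i])
    show "(\<lambda>K. jet_nth i (wzF_partial (Suc N) K)) \<longlonglongrightarrow> (\<Sum>t. jet_nth i (wzF (Suc N) (Suc t)))"
      unfolding wzF_partial_def jet_nth_simps
      by (intro summable_LIMSEQ wzF_series(1) i) simp
    show "(\<lambda>K. jet_nth i (wzG (Suc j) (Suc K))) \<longlonglongrightarrow> 0" for j
      by (intro wzG_tendsto_zero i) simp
  qed
  moreover have "jet_nth i (wzF_partial 1 K) - jet_nth i (wzF_partial (Suc N) K)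
        - (\<Sum>j<N. jet_nth i (wzG (Suc j) (Suc K))) = jet_nth i (Mprod_col N)" for K
    using arg_cong[OF wzF_partial_telescope, of "jet_nth i"] by (simp add: jet_nth_simps)
  ultimately show ?thesis
    using LIMSEQ_const_iff by fastforce
qed

lemma wzF_bound_tendsto_zero: "(\<lambda>N. wzF_bound (Suc N)) \<longlonglongrightarrow> 0"
proof (rule Lim_null_comparison)
  show "(\<lambda>N. 2 * real N * (5 * real N + 6)^2 / 4 ^ N) \<longlonglongrightarrow> 0"
    by real_asymp
  show "\<forall>\<^sub>F N in sequentially. norm (wzF_bound (Suc N)) \<le> 2 * real N * (5 * real N + 6)^2 / 4 ^ N"
  proof (rule eventually_mono[OF eventually_gt_at_top[of 0]])
    fix N :: nat
    assume N: "N > 0"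
    have "wzF_bound (Suc N) = (5 * real N + 6)^2 / central_binom N"
      by (simp add: wzF_bound_def wz_norm_def algebra_simps)
    also have "\<dots> \<le> (5 * real N + 6)^2 / (4 ^ N / (2 * real N))"
      using central_binomial_lower_bound[OF N] N
      by (intro divide_left_mono) (auto simp: central_binom_def)
    also have "\<dots> = 2 * real N * (5 * real N + 6)^2 / 4 ^ N"
      using N by (simp add: field_simps)
    finally show "norm (wzF_bound (Suc N)) \<le> 2 * real N * (5 * real N + 6)^2 / 4 ^ N"
      using wz_norm_pos[of "Suc N"] by (simp add: wzF_bound_def)
  qed
qed

lemma Mprod_col_tendsto: "i < 3 \<Longrightarrow> (\<lambda>N. jet_nth i (Mprod_col N)) \<longlonglongrightarrow> jet_nth i zeta_jet"
proof -
  assume i: "i < 3"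
  have "(\<lambda>N. \<Sum>t. jet_nth i (wzF (Suc N) (Suc t))) \<longlonglongrightarrow> 0"
  proof (rule Lim_null_comparison)
    show "(\<lambda>N. wzF_bound (Suc N) * (\<Sum>t. 1 / real (Suc t) ^ 2)) \<longlonglongrightarrow> 0"
      by (rule tendsto_mult_left_zero[OF wzF_bound_tendsto_zero])
    show "\<forall>\<^sub>F N in sequentially. norm (\<Sum>t. jet_nth i (wzF (Suc N) (Suc t)))
        \<le> wzF_bound (Suc N) * (\<Sum>t. 1 / real (Suc t) ^ 2)"
      using wzF_series(2)[OF _ i] by (intro always_eventually allI) simp
  qed
  then have "(\<lambda>N. jet_nth i zeta_jet - (\<Sum>t. jet_nth i (wzF (Suc N) (Suc t))))
      \<longlonglongrightarrow> jet_nth i zeta_jet - 0"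
    by (intro tendsto_diff tendsto_const)
  then show ?thesis by (simp add: Mprod_col_eq[OF i])
qed

theorem mainTheorem4:
  shows "Mprod \<longlonglongrightarrow>
           mat4 [[0, 0, 0, zeta 6],
                 [0, 0, 0, zeta 4],
                 [0, 0, 0, zeta 2],
                 [0, 0, 0, 1]]"
proof -
  have "mat4 [[0, 0, 0, zeta 6], [0, 0, 0, zeta 4], [0, 0, 0, zeta 2], [0, 0, 0, 1]]
      = jet_block 0 zeta_jet"
    by (simp add: jet_block_def zeta_jet_def)
  moreover have "(\<lambda>N. jet_block (Mprod_jet N) (Mprod_col N)) \<longlonglongrightarrow> jet_block 0 zeta_jet"
    using Mprod_jet_tendsto Mprod_col_tendsto by (intro jet_block_tendsto) (simp_all add: jet_nth_simps)
  ultimately show ?thesis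
    unfolding Mprod_eq_jet_block[abs_def] by simp
qed

end
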